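(* Let $n,k,r$ be positive integers with $r\le k$, let $\mathcal{F}=\mathcal{F}(n,k,r)$, and let $\gamma>10r/k$. If $T\subseteq V(\mathcal{F})$ with $|T|>\gamma\, v(\mathcal{F})=\gamma k^n$, then $$e(\mathcal{F}[T])\ge\Big(\gamma-\frac{r}{k}\Big)^r e(\mathcal{F}).$$
   Context: $\mathcal{F}(n,k,r)$ is the $r$-uniform hypergraph with vertex set $[k]^n$ whose edges are the $r$-element subsets of $[k]^n$ lying on a common axis-parallel line, i.e., $r$ points that agree in all but one coordinate. Thus $e(\mathcal{F})=n\binom{k}{r}k^{n-1}$. $\mathcal{F}[T]$ denotes the subhypergraph induced by $T$. *)

theory Defs
  imports Complex_Main
begin

definition grid_vertices :: "nat \<Rightarrow> nat \<Rightarrow> nat list set" where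
  "grid_vertices n k = {x. length x = n \<and> (\<forall>j<n. x ! j < k)}"

text \<open>Edges are recorded together with
  their direction i (this matters only for r = 1, where a single point lies on n lines;
  for r >= 2 the direction is determined by S). This makes e(F) = n * (k choose r) * k^(n-1).\<close>
definition grid_edges_on :: "nat \<Rightarrow> nat \<Rightarrow> nat \<Rightarrow> nat list set \<Rightarrow> (nat \<times> nat list set) set" where
  "grid_edges_on n k r T = {(i, S). i < n \<and> S \<subseteq> T \<and> card S = r \<and>
      (\<forall>x\<in>S. \<forall>y\<in>S. \<forall>j<n. j \<noteq> i \<longrightarrow> x ! j = y ! j)}"

definition num_edges_induced :: "nat \<Rightarrow> nat \<Rightarrow> nat \<Rightarrow> nat list set \<Rightarrow> nat" where
  "num_edges_induced n k r T = card (grid_edges_on n k r (T \<inter> grid_vertices n k))"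

definition num_edges :: "nat \<Rightarrow> nat \<Rightarrow> nat \<Rightarrow> nat" where
  "num_edges n k r = num_edges_induced n k r (grid_vertices n k)"

end

theory Submission
  imports Defs "HOL-Analysis.Analysis"
begin

text \<open>Fix a direction i. The edges of F[T] in direction i are the r-subsets of T lying on one
  axis-parallel line, so a line meeting T in t points carries C(t, r) of them. Summing over all
  grid points x the line through x in direction i counts every line exactly k times, which avoids
  enumerating the lines. Since C(t, r) \<ge> C(k, r) max(0, (t - r)/k)^r and x^r is convex on [0, \<infinity>),
  Jensen's inequality bounds the number of direction-i edges by the r-th power of the mean of
  (t - r)/k, and this mean exceeds \<gamma> - r/k because the line intersections sum to k |T|.
  Summing over the n directions gives the theorem; only \<gamma> \<ge> r/k is needed.\<close>

lemma sum_card_filter_swap: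
  assumes "finite A" "finite B"
  shows "(\<Sum>a\<in>A. card {b\<in>B. R a b}) = (\<Sum>b\<in>B. card {a\<in>A. R a b})"
proof -
  have card_filter: "card {x\<in>X. P x} = (\<Sum>x\<in>X. if P x then 1 else 0)" if "finite X" for X and P :: "_ \<Rightarrow> bool"
    using sum.inter_filter[OF that, of "\<lambda>_. 1 :: nat" P] by simp
  show ?thesis
    using assms by (simp add: card_filter sum.swap[of _ A])
qed

lemma choose_mul_power_le:
  fixes t k r m :: nat
  assumes "m \<le> r" "r \<le> t" "t \<le> k"
  shows "real (k choose m) * (real t - real r) ^ m \<le> real (t choose m) * real k ^ m"
  using assms(1)
proof (induction m)
  case 0 then show ?case by simp
next
  case (Suc m)
  have ih: "real (k choose m) * (real t - real r) ^ m \<le> real (t choose m) * real k ^ m"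
    using Suc by simp
  have step: "(real k - real m) * (real t - real r) \<le> (real t - real m) * real k"
  proof -
    have "(real t - real m) * real k - (real k - real m) * (real t - real r)
          = (real r - real m) * real k + real m * (real t - real r)"
      by (simp add: algebra_simps)
    moreover have "0 \<le> (real r - real m) * real k + real m * (real t - real r)"
      using Suc.prems assms by auto
    ultimately show ?thesis by linarith
  qed
  have absorb: "real (Suc m) * real (a choose Suc m) = (real a - real m) * real (a choose m)"
    if "m \<le> a" for a
    using that by (metis binomial_absorb_comp binomial_absorption of_nat_diff of_nat_mult)
  have "real (Suc m) * (real (k choose Suc m) * (real t - real r) ^ Suc m)
      = (real (Suc m) * real (k choose Suc m)) * ((real t - real r) ^ m * (real t - real r))"
    by (simp add: mult_ac)
  also have "\<dots> = (real (k choose m) * (real t - real r) ^ m) * ((real k - real m) * (real t - real r))"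
    using Suc.prems assms by (simp only: absorb) (simp add: mult_ac)
  also have "\<dots> \<le> (real (t choose m) * real k ^ m) * ((real t - real m) * real k)"
    using Suc.prems assms by (intro mult_mono[OF ih step]) auto
  also have "\<dots> = (real (Suc m) * real (t choose Suc m)) * (real k ^ m * real k)"
    using Suc.prems assms by (simp only: absorb) (simp add: mult_ac)
  also have "\<dots> = real (Suc m) * (real (t choose Suc m) * real k ^ Suc m)"
    by (simp add: mult_ac)
  finally show ?case by (simp only: mult_le_cancel_left_pos of_nat_0_less_iff zero_less_Suc)
qed

lemma choose_ge_scaled_power:
  fixes t k r :: nat
  assumes "t \<le> k" "0 < k" "0 < r"
  shows "real (k choose r) * (max 0 ((real t - real r) / real k)) ^ r \<le> real (t choose r)"
proof (cases "r \<le> t")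
  case True
  then have "real (k choose r) * (real t - real r) ^ r \<le> real (t choose r) * real k ^ r"
    using choose_mul_power_le assms by blast
  then show ?thesis
    using True assms by (simp add: power_divide field_simps)
next
  case False
  then show ?thesis
    using assms by (simp add: divide_nonpos_pos power_0_left)
qed

lemma convex_on_power_nonneg: "convex_on {0::real..} (\<lambda>x. x ^ r)"
  by (cases "even r")
    (auto intro: convex_on_subset[OF convex_power_even] convex_power_odd)

lemma mean_power_le_mean_of_powers:
  fixes f :: "'a \<Rightarrow> real"
  assumes "finite A" "A \<noteq> {}" "\<And>a. a \<in> A \<Longrightarrow> 0 \<le> f a"
  shows "((\<Sum>a\<in>A. f a) / card A) ^ r \<le> (\<Sum>a\<in>A. f a ^ r) / card A"
proof -
  have "0 < real (card A)" using assms by (simp add: card_gt_0_iff)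
  then have "(\<Sum>a\<in>A. (1 / card A) *\<^sub>R f a) ^ r \<le> (\<Sum>a\<in>A. (1 / card A) * f a ^ r)"
    using assms by (intro convex_on_sum[OF _ _ convex_on_power_nonneg]) auto
  then show ?thesis
    by (simp add: sum_distrib_left[symmetric] sum_distrib_right[symmetric] divide_inverse mult.commute)
qed

lemma sum_choose_ge_density_power:
  fixes t :: "'a \<Rightarrow> nat" and \<gamma> :: real
  assumes "finite G" "G \<noteq> {}" "\<And>x. x \<in> G \<Longrightarrow> t x \<le> k" "0 < k" "0 < r"
    and "real r / real k \<le> \<gamma>" and "\<gamma> * real k * card G \<le> (\<Sum>x\<in>G. real (t x))"
  shows "(\<gamma> - real r / real k) ^ r * (card G * real (k choose r)) \<le> (\<Sum>x\<in>G. real (t x choose r))"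
proof -
  define a where "a x = max 0 ((real (t x) - real r) / real k)" for x
  have N: "0 < real (card G)" using assms by (simp add: card_gt_0_iff)
  have "(\<gamma> - real r / real k) * card G \<le> (\<Sum>x\<in>G. real (t x)) / real k - card G * real r / real k"
    using assms(4,7) by (simp add: field_simps)
  also have "\<dots> = (\<Sum>x\<in>G. (real (t x) - real r) / real k)"
    by (simp add: sum_subtractf diff_divide_distrib flip: sum_divide_distrib)
  also have "\<dots> \<le> (\<Sum>x\<in>G. a x)"
    by (intro sum_mono) (simp add: a_def)
  finally have "(\<gamma> - real r / real k) ^ r \<le> ((\<Sum>x\<in>G. a x) / card G) ^ r"
    using N assms(6) by (intro power_mono) (simp_all add: field_simps)
  also have "\<dots> \<le> (\<Sum>x\<in>G. a x ^ r) / card G"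
    using assms by (intro mean_power_le_mean_of_powers) (auto simp: a_def)
  finally have mean: "card G * (\<gamma> - real r / real k) ^ r \<le> (\<Sum>x\<in>G. a x ^ r)"
    using N by (simp add: field_simps)
  have "(\<gamma> - real r / real k) ^ r * (card G * real (k choose r)) \<le> real (k choose r) * (\<Sum>x\<in>G. a x ^ r)"
    using mult_left_mono[OF mean, of "real (k choose r)"] by (simp add: mult_ac)
  also have "\<dots> \<le> (\<Sum>x\<in>G. real (t x choose r))"
    unfolding sum_distrib_left a_def using assms by (intro sum_mono choose_ge_scaled_power) auto
  finally show ?thesis .
qed

definition grid_line :: "nat \<Rightarrow> nat \<Rightarrow> nat \<Rightarrow> nat list \<Rightarrow> nat list set" where
  "grid_line n k i x = {y \<in> grid_vertices n k. \<forall>j<n. j \<noteq> i \<longrightarrow> y ! j = x ! j}"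

definition axis_edges :: "nat \<Rightarrow> nat \<Rightarrow> nat \<Rightarrow> nat list set \<Rightarrow> nat list set set" where
  "axis_edges n r i T = {S. S \<subseteq> T \<and> card S = r \<and> (\<forall>x\<in>S. \<forall>y\<in>S. \<forall>j<n. j \<noteq> i \<longrightarrow> x ! j = y ! j)}"

lemma grid_vertices_eq_lists: "grid_vertices n k = {xs. set xs \<subseteq> {0..<k} \<and> length xs = n}"
  unfolding grid_vertices_def by (auto simp: subset_iff in_set_conv_nth)

lemma finite_grid_vertices: "finite (grid_vertices n k)"
  unfolding grid_vertices_eq_lists by (rule finite_lists_length_eq) simp

lemma card_grid_vertices: "card (grid_vertices n k) = k ^ n"
  unfolding grid_vertices_eq_lists by (subst card_lists_length_eq) simp_all

lemma finite_axis_edges: "finite T \<Longrightarrow> finite (axis_edges n r i T)"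
  by (rule finite_subset[of _ "Pow T"]) (auto simp: axis_edges_def)

lemma card_grid_edges_on:
  assumes "finite T"
  shows "card (grid_edges_on n k r T) = (\<Sum>i<n. card (axis_edges n r i T))"
proof -
  have "grid_edges_on n k r T = Sigma {..<n} (\<lambda>i. axis_edges n r i T)"
    unfolding grid_edges_on_def axis_edges_def by auto
  then show ?thesis
    using assms by (simp add: finite_axis_edges)
qed

lemma card_grid_line:
  assumes "x \<in> grid_vertices n k" "i < n"
  shows "card (grid_line n k i x) = k"
proof -
  have lx: "length x = n" using assms unfolding grid_vertices_def by auto
  have "grid_line n k i x = (\<lambda>c. x[i := c]) ` {0..<k}"
  proof (intro equalityI subsetI)
    fix y assume "y \<in> grid_line n k i x"
    then have "y = x[i := y ! i]" "y ! i < k"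
      using assms lx by (auto intro!: nth_equalityI simp: grid_line_def grid_vertices_def nth_list_update)
    then show "y \<in> (\<lambda>c. x[i := c]) ` {0..<k}" by force
  qed (use assms lx in \<open>auto simp: grid_line_def grid_vertices_def nth_list_update\<close>)
  moreover have "inj_on (\<lambda>c. x[i := c]) {0..<k}"
    by (rule inj_onI) (metis assms(2) lx nth_list_update_eq)
  ultimately show ?thesis by (simp add: card_image)
qed

lemma grid_lines_containing:
  assumes "s \<in> S" "S \<subseteq> grid_line n k i s"
  shows "{x \<in> grid_vertices n k. S \<subseteq> grid_line n k i x} = grid_line n k i s"
  using assms unfolding grid_line_def by auto

lemma sum_card_inter_grid_line:
  assumes "T \<subseteq> grid_vertices n k" "i < n"
  shows "(\<Sum>x\<in>grid_vertices n k. card (T \<inter> grid_line n k i x)) = k * card T"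
proof -
  have fT: "finite T" using assms finite_grid_vertices finite_subset by blast
  have "(\<Sum>x\<in>grid_vertices n k. card (T \<inter> grid_line n k i x))
      = (\<Sum>y\<in>T. card {x \<in> grid_vertices n k. {y} \<subseteq> grid_line n k i x})"
    using sum_card_filter_swap[OF finite_grid_vertices fT] by (simp add: Int_def)
  also have "\<dots> = (\<Sum>y\<in>T. k)"
  proof (intro sum.cong refl)
    fix y assume "y \<in> T"
    then have y: "y \<in> grid_vertices n k" using assms(1) by blast
    then have "{x \<in> grid_vertices n k. {y} \<subseteq> grid_line n k i x} = grid_line n k i y"
      by (intro grid_lines_containing) (auto simp: grid_line_def)
    then show "card {x \<in> grid_vertices n k. {y} \<subseteq> grid_line n k i x} = k"
      using card_grid_line[OF y assms(2)] by simp
  qed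
  finally show ?thesis by simp
qed

lemma card_choose_inter_grid_line:
  assumes "finite T"
  shows "card (T \<inter> grid_line n k i x) choose r = card {S \<in> axis_edges n r i T. S \<subseteq> grid_line n k i x}"
proof -
  have "card (T \<inter> grid_line n k i x) choose r = card {S. S \<subseteq> T \<inter> grid_line n k i x \<and> card S = r}"
    using assms by (intro n_subsets[symmetric]) simp
  also have "{S. S \<subseteq> T \<inter> grid_line n k i x \<and> card S = r} = {S \<in> axis_edges n r i T. S \<subseteq> grid_line n k i x}"
    unfolding axis_edges_def by (auto simp: grid_line_def subset_iff)
  finally show ?thesis .
qed

lemma sum_choose_card_inter_grid_line:
  assumes "T \<subseteq> grid_vertices n k" "i < n" "0 < r"
  shows "(\<Sum>x\<in>grid_vertices n k. card (T \<inter> grid_line n k i x) choose r) = k * card (axis_edges n r i T)"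
proof -
  have fT: "finite T" using assms finite_grid_vertices finite_subset by blast
  have "(\<Sum>x\<in>grid_vertices n k. card (T \<inter> grid_line n k i x) choose r)
      = (\<Sum>x\<in>grid_vertices n k. card {S \<in> axis_edges n r i T. S \<subseteq> grid_line n k i x})"
    using card_choose_inter_grid_line[OF fT] by (rule sum.cong[OF refl])
  also have "\<dots> = (\<Sum>S\<in>axis_edges n r i T. card {x \<in> grid_vertices n k. S \<subseteq> grid_line n k i x})"
    by (rule sum_card_filter_swap[OF finite_grid_vertices finite_axis_edges[OF fT]])
  also have "\<dots> = (\<Sum>S\<in>axis_edges n r i T. k)"
  proof (intro sum.cong refl)
    fix S assume S: "S \<in> axis_edges n r i T"
    then have "S \<noteq> {}" using assms(3) by (auto simp: axis_edges_def)
    then obtain s where s: "s \<in> S" by blast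
    then have "s \<in> grid_vertices n k" using S assms(1) by (auto simp: axis_edges_def)
    moreover have "S \<subseteq> grid_line n k i s"
      using S s assms(1) unfolding axis_edges_def grid_line_def by blast
    ultimately show "card {x \<in> grid_vertices n k. S \<subseteq> grid_line n k i x} = k"
      using s by (simp add: grid_lines_containing card_grid_line assms(2))
  qed
  finally show ?thesis by simp
qed

lemma card_axis_edges_ge:
  fixes \<gamma> :: real
  assumes "T \<subseteq> grid_vertices n k" "i < n" "0 < k" "0 < r"
    and "real r / real k \<le> \<gamma>" and "\<gamma> * real k ^ n < card T"
  shows "(\<gamma> - real r / real k) ^ r * card (axis_edges n r i (grid_vertices n k))
      \<le> card (axis_edges n r i T)"
proof -
  let ?G = "grid_vertices n k"
  let ?t = "\<lambda>x. card (T \<inter> grid_line n k i x)"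
  have "(\<Sum>x\<in>?G. card (?G \<inter> grid_line n k i x) choose r) = (\<Sum>x\<in>?G. k choose r)"
    using card_grid_line[OF _ \<open>i < n\<close>] by (intro sum.cong refl) (simp add: Int_absorb1 grid_line_def)
  then have full_grid: "card ?G * (k choose r) = k * card (axis_edges n r i ?G)"
    using sum_choose_card_inter_grid_line[OF order_refl[of ?G] \<open>i < n\<close> \<open>0 < r\<close>] by simp
  have "?t x \<le> k" if "x \<in> ?G" for x
  proof -
    have "?t x \<le> card (grid_line n k i x)"
      by (intro card_mono) (auto simp: grid_line_def finite_grid_vertices)
    then show ?thesis using card_grid_line[OF that \<open>i < n\<close>] by simp
  qed
  moreover have "\<gamma> * real k * card ?G \<le> (\<Sum>x\<in>?G. real (?t x))"
    using assms by (simp add: card_grid_vertices sum_card_inter_grid_line mult_ac flip: of_nat_sum)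
  moreover have "?G \<noteq> {}"
    using assms card_grid_vertices[of n k] by auto
  ultimately have bound: "(\<gamma> - real r / real k) ^ r * (card ?G * real (k choose r))
      \<le> (\<Sum>x\<in>?G. real (?t x choose r))"
    using assms by (intro sum_choose_ge_density_power finite_grid_vertices) auto
  have "k * ((\<gamma> - real r / real k) ^ r * card (axis_edges n r i ?G))
      = (\<gamma> - real r / real k) ^ r * (card ?G * real (k choose r))"
    using arg_cong[OF full_grid, of real] by (simp add: mult_ac)
  also have "\<dots> \<le> (\<Sum>x\<in>?G. real (?t x choose r))"
    by (rule bound)
  also have "\<dots> = k * card (axis_edges n r i T)"
    using assms by (simp add: sum_choose_card_inter_grid_line flip: of_nat_sum)
  finally show ?thesis
    using \<open>0 < k\<close> by simp
qed

theorem lemma7p1: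
  fixes n k r :: nat and \<gamma> :: real and T :: "nat list set"
  assumes "0 < n" "0 < k" "0 < r" "r \<le> k"
    and "\<gamma> > 10 * real r / real k"
    and "T \<subseteq> grid_vertices n k"
    and "real (card T) > \<gamma> * real k ^ n"
  shows "real (num_edges_induced n k r T) \<ge> (\<gamma> - real r / real k) ^ r * real (num_edges n k r)"
proof -
  let ?G = "grid_vertices n k"
  have "finite T"
    using assms(6) finite_grid_vertices finite_subset by blast
  have "real r / real k \<le> 10 * real r / real k"
    by (simp add: divide_right_mono)
  then have "real r / real k \<le> \<gamma>"
    using assms(5) by linarith
  then have "(\<Sum>i<n. (\<gamma> - real r / real k) ^ r * card (axis_edges n r i ?G))
      \<le> (\<Sum>i<n. real (card (axis_edges n r i T)))"
    using assms by (intro sum_mono card_axis_edges_ge) auto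
  also have "\<dots> = num_edges_induced n k r T"
    using assms(6) \<open>finite T\<close>
    by (simp add: num_edges_induced_def card_grid_edges_on Int_absorb2)
  finally show ?thesis
    by (simp add: num_edges_def num_edges_induced_def card_grid_edges_on finite_grid_vertices
        sum_distrib_left)
qed

end
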